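(* Let $\mathcal{Q}^T=\mathrm{CSS}(\mathcal{C}_1,\mathcal{C}_2)$ be a T-triorthogonal $[[n,k,d]]$ code with $n-k\equiv 0\pmod 2$. Then there exists a binary linear code $\mathcal{C}\subseteq\mathbb{F}_2^n$ such that $\mathcal{Q}^{\rm Sym}=\mathrm{CSS}(\mathcal{C},\mathcal{C})$ is a symmetric CSS code and the pair $(\mathcal{Q}^T,\mathcal{Q}^{\rm Sym})$ is CNOT-transversal (with $\mathcal{Q}^T$ as control and $\mathcal{Q}^{\rm Sym}$ as target).
   Context: A binary matrix $\mathbf{G}=[G_{ij}]\in\mathbb{F}_2^{m\times n}$ is triorthogonal if $\sum_i G_{ai}G_{bi}=0\pmod 2$ for all rows $a\ne b$ and $\sum_i G_{ai}G_{bi}G_{ci}=0\pmod 2$ for all distinct rows $a,b,c$. Writing $\mathbf{G}=\begin{bmatrix}\mathbf{G}_1\\ \mathbf{G}_0\end{bmatrix}$ (rows assumed linearly independent) with $\mathbf{G}_1$ the $k$ odd-weight rows and $\mathbf{G}_0$ the even-weight rows, the triorthogonal code is $\mathcal{Q}^T=\mathrm{CSS}(\mathcal{C}_1,\mathcal{C}_2)$ with $\mathcal{C}_1$ generated by $\mathbf{G}$ and $\mathcal{C}_2$ the dual of the code generated by $\mathbf{G}_0$. For binary codes with $\mathcal{C}_b^\perp\subset\mathcal{C}_a$, $\mathrm{CSS}(\mathcal{C}_a,\mathcal{C}_b)$ is spanned by $|\bm{\psi}\rangle_L=|\mathcal{C}_b^\perp|^{-1/2}\sum_{\mathbf{y}\in\mathcal{C}_b^\perp}|\bm{\psi}\mathbf{A}+\mathbf{y}\rangle$,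 $\bm{\psi}\in\mathbb{F}_2^k$, where the mapping matrix $\mathbf{A}\in\mathbb{F}_2^{k\times n}$ has rows representing a basis of $\mathcal{C}_a/\mathcal{C}_b^\perp$ (for $\mathcal{Q}^T$, $\mathbf{A}=\mathbf{G}_1$). A CSS code is symmetric if $\mathcal{C}_a=\mathcal{C}_b$. $\mathcal{Q}^T$ is T-triorthogonal if it is Pauli $X$-transversal (applying $\mathbf{X}$ on every physical qubit implements logical $\mathbf{X}$ on every logical qubit); such codes are transversal for $\mathbf{T}=\mathrm{diag}(1,e^{i\pi/4})$. Two codes with $k$ logical qubits on $n$ physical qubits form a CNOT-transversal pair (control first, target second) if, for suitable mapping matrices defining their logical bases, applying physical CNOT from qubit $i$ of the first block to qubit $i$ of the second for all $i$ maps $|\bm{\psi}\rangle_L|\bm{\phi}\rangle_L\mapsto|\bm{\psi}\rangle_L|\bm{\psi}+\bm{\phi}\rangle_L$ for all $\bm{\psi},\bm{\phi}\in\mathbb{F}_2^k$. *)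

theory Defs
  imports Complex_Main
begin

text \<open>The field F2 is modelled by bool (True = 1, addition = xor,
  multiplication = conjunction). A vector of F2^n is a function nat => bool that
  vanishes outside the index range 0..n-1. A k x n binary matrix is given by its rows,
  a function nat => (nat => bool) whose rows 0..k-1 are used.
  Computational basis states of n qubits are labelled by vectors of F2^n; a pure
  state is its amplitude function (nat => bool) => complex.\<close>

definition F2vec :: "nat \<Rightarrow> (nat \<Rightarrow> bool) set" where
  "F2vec n = {x. \<forall>i. n \<le> i \<longrightarrow> \<not> x i}"

definition vzero :: "nat \<Rightarrow> bool" where
  "vzero = (\<lambda>i. False)"

definition vadd :: "(nat \<Rightarrow> bool) \<Rightarrow> (nat \<Rightarrow> bool) \<Rightarrow> (nat \<Rightarrow> bool)" where
  "vadd x y = (\<lambda>i. x i \<noteq> y i)"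

definition vones :: "nat \<Rightarrow> (nat \<Rightarrow> bool)" where
  "vones n = (\<lambda>i. i < n)"

definition weight :: "nat \<Rightarrow> (nat \<Rightarrow> bool) \<Rightarrow> nat" where
  "weight n x = card {i. i < n \<and> x i}"

definition dotF2 :: "nat \<Rightarrow> (nat \<Rightarrow> bool) \<Rightarrow> (nat \<Rightarrow> bool) \<Rightarrow> bool" where
  "dotF2 n x y = odd (card {i. i < n \<and> x i \<and> y i})"

text \<open>row vector times matrix: psi A for psi in F2^k and A with k rows\<close>
definition lincomb :: "nat \<Rightarrow> (nat \<Rightarrow> nat \<Rightarrow> bool) \<Rightarrow> (nat \<Rightarrow> bool) \<Rightarrow> (nat \<Rightarrow> bool)" where
  "lincomb k A psi = (\<lambda>j. odd (card {i. i < k \<and> psi i \<and> A i j}))"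

definition rowspace :: "nat \<Rightarrow> (nat \<Rightarrow> nat \<Rightarrow> bool) \<Rightarrow> (nat \<Rightarrow> bool) set" where
  "rowspace k A = {lincomb k A psi | psi. psi \<in> F2vec k}"

definition rows_independent :: "nat \<Rightarrow> (nat \<Rightarrow> nat \<Rightarrow> bool) \<Rightarrow> bool" where
  "rows_independent k A \<longleftrightarrow> (\<forall>psi \<in> F2vec k. lincomb k A psi = vzero \<longrightarrow> psi = vzero)"

definition lincode :: "nat \<Rightarrow> (nat \<Rightarrow> bool) set \<Rightarrow> bool" where
  "lincode n C \<longleftrightarrow> C \<subseteq> F2vec n \<and> vzero \<in> C \<and> (\<forall>x\<in>C. \<forall>y\<in>C. vadd x y \<in> C)"

definition dual :: "nat \<Rightarrow> (nat \<Rightarrow> bool) set \<Rightarrow> (nat \<Rightarrow> bool) set" where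
  "dual n C = {y \<in> F2vec n. \<forall>x\<in>C. \<not> dotF2 n x y}"

definition triorthogonal :: "nat \<Rightarrow> nat \<Rightarrow> (nat \<Rightarrow> nat \<Rightarrow> bool) \<Rightarrow> bool" where
  "triorthogonal m n G \<longleftrightarrow>
     (\<forall>a<m. \<forall>b<m. a \<noteq> b \<longrightarrow> even (card {i. i < n \<and> G a i \<and> G b i})) \<and>
     (\<forall>a<m. \<forall>b<m. \<forall>c<m. a \<noteq> b \<and> a \<noteq> c \<and> b \<noteq> c \<longrightarrow>
        even (card {i. i < n \<and> G a i \<and> G b i \<and> G c i}))"

definition stack :: "nat \<Rightarrow> (nat \<Rightarrow> nat \<Rightarrow> bool) \<Rightarrow> (nat \<Rightarrow> nat \<Rightarrow> bool) \<Rightarrow> (nat \<Rightarrow> nat \<Rightarrow> bool)" where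
  "stack k G1 G0 = (\<lambda>i. if i < k then G1 i else G0 (i - k))"

text \<open>A is a mapping matrix (k rows) for CSS(Ca,Cb): its rows represent a basis of
  Ca / Cb^perp.\<close>
definition mapping_matrix :: "nat \<Rightarrow> nat \<Rightarrow> (nat \<Rightarrow> bool) set \<Rightarrow> (nat \<Rightarrow> bool) set
    \<Rightarrow> (nat \<Rightarrow> nat \<Rightarrow> bool) \<Rightarrow> bool" where
  "mapping_matrix n k Ca Cb A \<longleftrightarrow>
     (\<forall>i<k. A i \<in> Ca) \<and>
     (\<forall>psi \<in> F2vec k. lincomb k A psi \<in> dual n Cb \<longrightarrow> psi = vzero) \<and>
     (\<forall>x\<in>Ca. \<exists>psi \<in> F2vec k. vadd x (lincomb k A psi) \<in> dual n Cb)"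

text \<open>logical basis state |psi>_L of CSS(Ca,Cb) w.r.t. mapping matrix A (k rows):
  |Cb^perp|^(-1/2) * sum over y in Cb^perp of |psi A + y>\<close>
definition css_state :: "nat \<Rightarrow> nat \<Rightarrow> (nat \<Rightarrow> bool) set \<Rightarrow> (nat \<Rightarrow> nat \<Rightarrow> bool)
    \<Rightarrow> (nat \<Rightarrow> bool) \<Rightarrow> ((nat \<Rightarrow> bool) \<Rightarrow> complex)" where
  "css_state n k Cb A psi = (\<lambda>x.
     if x \<in> {vadd (lincomb k A psi) y | y. y \<in> dual n Cb}
     then complex_of_real (1 / sqrt (real (card (dual n Cb)))) else 0)"

text \<open>Pauli X on every physical qubit of an n-qubit block\<close>
definition X_all :: "nat \<Rightarrow> ((nat \<Rightarrow> bool) \<Rightarrow> complex) \<Rightarrow> ((nat \<Rightarrow> bool) \<Rightarrow> complex)" where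
  "X_all n f = (\<lambda>x. f (vadd x (vones n)))"

definition tensor :: "((nat \<Rightarrow> bool) \<Rightarrow> complex) \<Rightarrow> ((nat \<Rightarrow> bool) \<Rightarrow> complex)
    \<Rightarrow> ((nat \<Rightarrow> bool) \<times> (nat \<Rightarrow> bool) \<Rightarrow> complex)" where
  "tensor f g = (\<lambda>(x, y). f x * g y)"

text \<open>transversal CNOT (qubit i of block 1 controls qubit i of block 2, for all i):
  |x>|y> goes to |x>|x+y>, so the amplitude of |x>|y> afterwards is the old amplitude of |x>|x+y>\<close>
definition cnot_transversal :: "((nat \<Rightarrow> bool) \<times> (nat \<Rightarrow> bool) \<Rightarrow> complex)
    \<Rightarrow> ((nat \<Rightarrow> bool) \<times> (nat \<Rightarrow> bool) \<Rightarrow> complex)" where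
  "cnot_transversal F = (\<lambda>(x, y). F (x, vadd x y))"

end

theory Submission
  imports Defs
begin

text \<open>The even rows G0 span a self-orthogonal code R, and the odd rows G1 are orthonormal
  and orthogonal to R. X-transversality applied to the logical zero puts 1 + (sum of the rows
  of G1) into R^perp^perp, so every vector orthogonal to R and to the rows of G1 is orthogonal
  to 1, i.e. has even weight. Hence a maximal self-orthogonal extension D of R that is
  orthogonal to G1 already contains every vector orthogonal to D and to G1, which makes G1 a
  mapping matrix of the symmetric code C = D^perp. Since C is contained in R^perp, the
  X-stabilisers R^perp^perp of the control are among those of the target, so transversal CNOT
  maps |psi>|phi> to |psi>|psi + phi>.\<close>

definition odd_count :: "nat \<Rightarrow> (nat \<Rightarrow> bool) \<Rightarrow> bool" where
  "odd_count k P = odd (card {i. i < k \<and> P i})"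

lemma odd_count_0 [simp]: "odd_count 0 P = False"
  by (simp add: odd_count_def)

lemma odd_count_Suc [simp]: "odd_count (Suc k) P = (odd_count k P \<noteq> P k)"
proof -
  have "{i. i < Suc k \<and> P i} = (if P k then insert k else id) {i. i < k \<and> P i}"
    by (auto simp: less_Suc_eq)
  then show ?thesis
    by (simp add: odd_count_def)
qed

lemma odd_count_xor: "odd_count k (\<lambda>i. P i \<noteq> Q i) = (odd_count k P \<noteq> odd_count k Q)"
  by (induction k) auto

lemma odd_count_conj_left: "odd_count k (\<lambda>i. b \<and> P i) = (b \<and> odd_count k P)"
  by (induction k) auto

lemma odd_count_swap:
  "odd_count n (\<lambda>j. odd_count k (\<lambda>i. P i j)) = odd_count k (\<lambda>i. odd_count n (\<lambda>j. P i j))"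
proof (induction k)
  case (Suc k)
  have "odd_count n (\<lambda>j. odd_count (Suc k) (\<lambda>i. P i j))
      = odd_count n (\<lambda>j. odd_count k (\<lambda>i. P i j) \<noteq> P k j)"
    by simp
  also have "\<dots> = (odd_count n (\<lambda>j. odd_count k (\<lambda>i. P i j)) \<noteq> odd_count n (P k))"
    by (rule odd_count_xor)
  finally show ?case
    using Suc by simp
qed (simp add: odd_count_def)

lemma odd_count_cong: "(\<And>i. i < k \<Longrightarrow> P i = Q i) \<Longrightarrow> odd_count k P = odd_count k Q"
  by (induction k) auto

lemma odd_count_False: "(\<And>i. i < k \<Longrightarrow> \<not> P i) \<Longrightarrow> \<not> odd_count k P"
  by (induction k) auto

lemma odd_count_single: "j < k \<Longrightarrow> odd_count k (\<lambda>i. P i \<and> i = j) = P j"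
proof -
  assume "j < k"
  then have "{i. i < k \<and> P i \<and> i = j} = (if P j then {j} else {})"
    by auto
  then show ?thesis
    by (simp add: odd_count_def)
qed

lemma odd_count_add: "odd_count (k + r) P = (odd_count k P \<noteq> odd_count r (\<lambda>i. P (k + i)))"
  by (induction r) auto

lemma dotF2_eq_odd_count: "dotF2 n x y = odd_count n (\<lambda>i. x i \<and> y i)"
  by (simp add: dotF2_def odd_count_def)

lemma lincomb_eq_odd_count: "lincomb k A psi j = odd_count k (\<lambda>i. psi i \<and> A i j)"
  by (simp add: lincomb_def odd_count_def)

lemma dotF2_commute: "dotF2 n x y = dotF2 n y x"
  by (simp add: dotF2_def conj_commute)

lemma dotF2_self: "dotF2 n x x = odd (weight n x)"
  by (simp add: dotF2_def weight_def)

lemma dotF2_vones: "dotF2 n x (vones n) = dotF2 n x x"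
  unfolding dotF2_eq_odd_count vones_def by (rule odd_count_cong) simp

lemma dotF2_vadd: "dotF2 n x (vadd y z) = (dotF2 n x y \<noteq> dotF2 n x z)"
  unfolding dotF2_eq_odd_count vadd_def odd_count_xor[symmetric]
  by (rule odd_count_cong) auto

lemma dotF2_lincomb: "dotF2 n x (lincomb k A psi) = odd_count k (\<lambda>i. psi i \<and> dotF2 n x (A i))"
proof -
  have "dotF2 n x (lincomb k A psi) = odd_count n (\<lambda>j. odd_count k (\<lambda>i. psi i \<and> x j \<and> A i j))"
    by (simp add: dotF2_eq_odd_count lincomb_eq_odd_count odd_count_conj_left[symmetric]
        conj_left_commute)
  also have "\<dots> = odd_count k (\<lambda>i. psi i \<and> dotF2 n x (A i))"
    by (simp add: odd_count_swap odd_count_conj_left dotF2_eq_odd_count)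
  finally show ?thesis .
qed

lemma vadd_F2vec: "x \<in> F2vec n \<Longrightarrow> y \<in> F2vec n \<Longrightarrow> vadd x y \<in> F2vec n"
  by (simp add: F2vec_def vadd_def)

lemma vadd_cancel_left [simp]: "vadd a (vadd a z) = z"
  by (auto simp: vadd_def)

lemma vadd_vzero_left [simp]: "vadd vzero x = x"
  by (simp add: vadd_def vzero_def)

lemma vadd_self [simp]: "vadd x x = vzero"
  by (simp add: vadd_def vzero_def)

lemma finite_F2vec: "finite (F2vec n)"
proof (rule finite_subset)
  show "F2vec n \<subseteq> (\<lambda>S i. i \<in> S) ` Pow {..<n}"
  proof
    fix x assume "x \<in> F2vec n"
    then have "x = (\<lambda>i. i \<in> {i. i < n \<and> x i})"
      by (auto simp: F2vec_def fun_eq_iff not_le[symmetric])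
    then show "x \<in> (\<lambda>S i. i \<in> S) ` Pow {..<n}" by blast
  qed
qed simp

lemma lincomb_vadd: "lincomb k A (vadd psi phi) = vadd (lincomb k A psi) (lincomb k A phi)"
proof
  fix j
  have "lincomb k A (vadd psi phi) j = odd_count k (\<lambda>i. (psi i \<and> A i j) \<noteq> (phi i \<and> A i j))"
    unfolding lincomb_eq_odd_count by (rule odd_count_cong) (auto simp: vadd_def)
  also have "\<dots> = vadd (lincomb k A psi) (lincomb k A phi) j"
    unfolding lincomb_eq_odd_count vadd_def by (rule odd_count_xor)
  finally show "lincomb k A (vadd psi phi) j = vadd (lincomb k A psi) (lincomb k A phi) j" .
qed

lemma lincomb_vzero [simp]: "lincomb k A vzero = vzero"
  by (simp add: fun_eq_iff lincomb_def vzero_def)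

lemma lincomb_F2vec: "(\<And>i. i < k \<Longrightarrow> A i \<in> F2vec n) \<Longrightarrow> lincomb k A psi \<in> F2vec n"
  unfolding F2vec_def lincomb_eq_odd_count by (auto intro!: odd_count_False)

lemma lincomb_cong: "(\<And>i. i < k \<Longrightarrow> psi i = phi i) \<Longrightarrow> lincomb k A psi = lincomb k A phi"
  unfolding fun_eq_iff lincomb_eq_odd_count by (auto intro!: odd_count_cong)

lemma lincomb_unit: "i < k \<Longrightarrow> lincomb k A (\<lambda>j. j = i) = A i"
proof -
  have "(\<lambda>j. j = i \<and> A j l) = (\<lambda>j. A j l \<and> j = i)" for l
    by auto
  then show "i < k \<Longrightarrow> ?thesis"
    by (simp add: fun_eq_iff lincomb_eq_odd_count odd_count_single)
qed

lemma row_in_rowspace: "i < k \<Longrightarrow> A i \<in> rowspace k A"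
proof -
  assume "i < k"
  then have "(\<lambda>j. j = i) \<in> F2vec k" and "lincomb k A (\<lambda>j. j = i) = A i"
    by (auto simp: F2vec_def lincomb_unit)
  then show ?thesis
    unfolding rowspace_def by force
qed

lemma rowspace_F2vec: "A ` {..<k} \<subseteq> F2vec n \<Longrightarrow> rowspace k A \<subseteq> F2vec n"
  unfolding rowspace_def by (auto intro!: lincomb_F2vec)

lemma lincomb_stack:
  "lincomb (k + r) (stack k G1 G0) phi = vadd (lincomb k G1 phi) (lincomb r G0 (\<lambda>i. phi (k + i)))"
proof
  fix j
  have "odd_count k (\<lambda>i. phi i \<and> stack k G1 G0 i j) = odd_count k (\<lambda>i. phi i \<and> G1 i j)"
    by (rule odd_count_cong) (simp add: stack_def)
  moreover have "odd_count r (\<lambda>i. phi (k + i) \<and> stack k G1 G0 (k + i) j)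
      = odd_count r (\<lambda>i. phi (k + i) \<and> G0 i j)"
    by (rule odd_count_cong) (simp add: stack_def)
  ultimately show "lincomb (k + r) (stack k G1 G0) phi j
      = vadd (lincomb k G1 phi) (lincomb r G0 (\<lambda>i. phi (k + i))) j"
    by (simp add: lincomb_eq_odd_count odd_count_add vadd_def)
qed

lemma dual_antimono: "A \<subseteq> B \<Longrightarrow> dual n B \<subseteq> dual n A"
  unfolding dual_def by auto

lemma dual_F2vec: "dual n C \<subseteq> F2vec n"
  unfolding dual_def by auto

lemma dual_Un: "dual n (A \<union> B) = dual n A \<inter> dual n B"
  unfolding dual_def by auto

lemma subset_dual_swap: "S \<subseteq> F2vec n \<Longrightarrow> T \<subseteq> dual n S \<Longrightarrow> S \<subseteq> dual n T"
  unfolding dual_def using dotF2_commute by blast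

lemma subset_dual_dual: "C \<subseteq> F2vec n \<Longrightarrow> C \<subseteq> dual n (dual n C)"
  by (simp add: subset_dual_swap)

lemma vadd_dual: "x \<in> dual n C \<Longrightarrow> y \<in> dual n C \<Longrightarrow> vadd x y \<in> dual n C"
  unfolding dual_def by (auto simp: vadd_F2vec dotF2_vadd)

lemma vadd_dual_iff: "x \<in> dual n C \<Longrightarrow> vadd x y \<in> dual n C \<longleftrightarrow> y \<in> dual n C"
  using vadd_dual[of x n C y] vadd_dual[of x n C "vadd x y"] by auto

lemma vzero_dual: "vzero \<in> dual n C"
  unfolding dual_def F2vec_def dotF2_def vzero_def by simp

lemma finite_dual: "finite (dual n C)"
  using finite_F2vec dual_F2vec by (rule finite_subset[rotated])

lemma lincode_dual: "lincode n (dual n C)"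
  unfolding lincode_def using dual_F2vec vzero_dual vadd_dual by blast

lemma lincomb_dual: "A ` {..<k} \<subseteq> dual n S \<Longrightarrow> lincomb k A psi \<in> dual n S"
  unfolding dual_def by (auto simp: dotF2_lincomb intro!: lincomb_F2vec odd_count_False)

lemma rowspace_subset_dual: "A ` {..<k} \<subseteq> dual n S \<Longrightarrow> rowspace k A \<subseteq> dual n S"
  unfolding rowspace_def using lincomb_dual by blast

lemma dual_rowspace:
  assumes "A ` {..<k} \<subseteq> F2vec n"
  shows "dual n (rowspace k A) = dual n (A ` {..<k})"
proof
  show "dual n (rowspace k A) \<subseteq> dual n (A ` {..<k})"
    by (rule dual_antimono) (auto intro: row_in_rowspace)
next
  have "A ` {..<k} \<subseteq> dual n (dual n (A ` {..<k}))"
    using assms by (rule subset_dual_dual)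
  then have "rowspace k A \<subseteq> dual n (dual n (A ` {..<k}))"
    by (rule rowspace_subset_dual)
  then show "dual n (A ` {..<k}) \<subseteq> dual n (rowspace k A)"
    by (rule subset_dual_swap[OF dual_F2vec])
qed

definition orthonormal_rows :: "nat \<Rightarrow> nat \<Rightarrow> (nat \<Rightarrow> nat \<Rightarrow> bool) \<Rightarrow> bool" where
  "orthonormal_rows n k A \<longleftrightarrow> (\<forall>i<k. \<forall>j<k. dotF2 n (A i) (A j) = (i = j))"

lemma orthonormal_rows_dotF2_lincomb:
  assumes "orthonormal_rows n k A" and "j < k"
  shows "dotF2 n (A j) (lincomb k A psi) = psi j"
proof -
  have "dotF2 n (A j) (lincomb k A psi) = odd_count k (\<lambda>i. psi i \<and> i = j)"
    unfolding dotF2_lincomb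
    using assms by (intro odd_count_cong) (auto simp: orthonormal_rows_def dotF2_commute)
  with \<open>j < k\<close> show ?thesis by (simp add: odd_count_single)
qed

lemma orthonormal_rows_lincomb_dual_imp_vzero:
  assumes "orthonormal_rows n k A" and "A ` {..<k} \<subseteq> E"
    and "psi \<in> F2vec k" and "lincomb k A psi \<in> dual n E"
  shows "psi = vzero"
proof
  fix j
  show "psi j = vzero j"
  proof (cases "j < k")
    case True
    then show ?thesis
      using assms orthonormal_rows_dotF2_lincomb[OF assms(1) True, of psi]
      by (auto simp: dual_def vzero_def)
  qed (use assms(3) in \<open>auto simp: F2vec_def vzero_def\<close>)
qed

lemma mem_vadd_coset: "w \<in> {vadd a z |z. z \<in> E} \<longleftrightarrow> vadd a w \<in> E"
  by (auto, metis vadd_cancel_left)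

lemma css_state_eq:
  "css_state n k Cb A psi x =
     (if vadd (lincomb k A psi) x \<in> dual n Cb
      then complex_of_real (1 / sqrt (real (card (dual n Cb)))) else 0)"
  unfolding css_state_def mem_vadd_coset ..

lemma css_state_nonzero_iff:
  "css_state n k Cb A psi x \<noteq> 0 \<longleftrightarrow> vadd (lincomb k A psi) x \<in> dual n Cb"
proof -
  have "card (dual n Cb) > 0"
    using finite_dual vzero_dual card_gt_0_iff by blast
  then show ?thesis
    by (simp add: css_state_eq)
qed

lemma X_all_css_state_imp_vones_dual:
  assumes "X_all n (css_state n k Cb A vzero) = css_state n k Cb A (vones k)"
  shows "vadd (lincomb k A (vones k)) (vones n) \<in> dual n Cb"
proof -
  let ?x0 = "lincomb k A (vones k)"
  have "css_state n k Cb A (vones k) ?x0 \<noteq> 0"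
    by (simp add: css_state_nonzero_iff vzero_dual)
  moreover have "X_all n (css_state n k Cb A vzero) ?x0 = css_state n k Cb A (vones k) ?x0"
    using assms by simp
  ultimately have "css_state n k Cb A vzero (vadd ?x0 (vones n)) \<noteq> 0"
    by (simp add: X_all_def)
  then show ?thesis
    by (simp add: css_state_nonzero_iff)
qed

lemma cnot_transversal_css_state:
  assumes "dual n Cb \<subseteq> dual n Cb'"
  shows "cnot_transversal (tensor (css_state n k Cb A psi) (css_state n k Cb' A phi))
       = tensor (css_state n k Cb A psi) (css_state n k Cb' A (vadd psi phi))"
proof (rule ext, clarify)
  fix x y
  show "cnot_transversal (tensor (css_state n k Cb A psi) (css_state n k Cb' A phi)) (x, y)
      = tensor (css_state n k Cb A psi) (css_state n k Cb' A (vadd psi phi)) (x, y)"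
  proof (cases "vadd (lincomb k A psi) x \<in> dual n Cb")
    case True
    let ?z = "vadd (lincomb k A psi) x"
    have z: "?z \<in> dual n Cb'" using True assms by blast
    have "vadd (lincomb k A phi) (vadd x y) = vadd ?z (vadd (lincomb k A (vadd psi phi)) y)"
      unfolding lincomb_vadd by (simp add: vadd_def fun_eq_iff) blast
    then show ?thesis
      using vadd_dual_iff[OF z]
      by (simp add: cnot_transversal_def tensor_def css_state_eq)
  qed (simp add: cnot_transversal_def tensor_def css_state_eq)
qed

lemma triorthogonal_dotF2:
  "triorthogonal m n G \<Longrightarrow> a < m \<Longrightarrow> b < m \<Longrightarrow> a \<noteq> b \<Longrightarrow> \<not> dotF2 n (G a) (G b)"
  unfolding triorthogonal_def dotF2_def by blast

lemma triorthogonal_stack_orthogonality: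
  assumes rows: "\<forall>i<k + r. stack k G1 G0 i \<in> F2vec n"
    and trio: "triorthogonal (k + r) n (stack k G1 G0)"
    and G1_odd: "\<forall>i<k. odd (weight n (G1 i))"
    and G0_even: "\<forall>i<r. even (weight n (G0 i))"
  shows "orthonormal_rows n k G1"
    and "G1 ` {..<k} \<subseteq> dual n (G0 ` {..<r})"
    and "G0 ` {..<r} \<subseteq> dual n (G0 ` {..<r})"
proof -
  let ?S = "stack k G1 G0"
  have dot: "dotF2 n (?S a) (?S b) \<longleftrightarrow> a = b \<and> a < k" if "a < k + r" "b < k + r" for a b
  proof (cases "a = b")
    case True
    then show ?thesis
      using that G1_odd G0_even by (auto simp: dotF2_self stack_def)
  qed (use triorthogonal_dotF2[OF trio that] in simp)
  show "orthonormal_rows n k G1"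
    unfolding orthonormal_rows_def
  proof (intro allI impI)
    fix i j assume "i < k" "j < k"
    then show "dotF2 n (G1 i) (G1 j) = (i = j)"
      using dot[of i j] by (simp add: stack_def)
  qed
  have G1_row: "G1 i = ?S i" "G1 i \<in> F2vec n" if "i < k" for i
    using that rows[rule_format, of i] by (simp_all add: stack_def)
  have G0_row: "G0 j = ?S (k + j)" "G0 j \<in> F2vec n" if "j < r" for j
    using that rows[rule_format, of "k + j"] by (simp_all add: stack_def)
  show "G1 ` {..<k} \<subseteq> dual n (G0 ` {..<r})"
    using G1_row G0_row dot by (auto simp: dual_def)
  show "G0 ` {..<r} \<subseteq> dual n (G0 ` {..<r})"
    using G0_row dot by (auto simp: dual_def)
qed

lemma mapping_matrix_stack:
  assumes orth: "orthonormal_rows n k G1"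
    and G1_dual: "G1 ` {..<k} \<subseteq> dual n (rowspace r G0)"
    and G0_F2vec: "G0 ` {..<r} \<subseteq> F2vec n"
  shows "mapping_matrix n k (rowspace (k + r) (stack k G1 G0)) (dual n (rowspace r G0)) G1"
  unfolding mapping_matrix_def
proof (intro conjI ballI allI impI)
  fix i assume "i < k"
  then show "G1 i \<in> rowspace (k + r) (stack k G1 G0)"
    using row_in_rowspace[of i "k + r" "stack k G1 G0"] by (simp add: stack_def)
next
  fix psi assume "psi \<in> F2vec k" "lincomb k G1 psi \<in> dual n (dual n (rowspace r G0))"
  then show "psi = vzero"
    using orthonormal_rows_lincomb_dual_imp_vzero orth G1_dual by blast
next
  fix x assume "x \<in> rowspace (k + r) (stack k G1 G0)"
  then obtain phi where x: "x = lincomb (k + r) (stack k G1 G0) phi"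
    unfolding rowspace_def by blast
  define psi where "psi = (\<lambda>i. i < k \<and> phi i)"
  define chi where "chi = (\<lambda>i. i < r \<and> phi (k + i))"
  have "lincomb k G1 psi = lincomb k G1 phi"
    by (rule lincomb_cong) (simp add: psi_def)
  moreover have "lincomb r G0 chi = lincomb r G0 (\<lambda>i. phi (k + i))"
    by (rule lincomb_cong) (simp add: chi_def)
  ultimately have "vadd x (lincomb k G1 psi) = lincomb r G0 chi"
    by (auto simp: x lincomb_stack vadd_def)
  moreover have "lincomb r G0 chi \<in> rowspace r G0"
    by (auto simp: chi_def F2vec_def rowspace_def)
  then have "lincomb r G0 chi \<in> dual n (dual n (rowspace r G0))"
    using subset_dual_dual[OF rowspace_F2vec[OF G0_F2vec]] by blast
  moreover have "psi \<in> F2vec k"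
    by (simp add: psi_def F2vec_def)
  ultimately show "\<exists>psi\<in>F2vec k. vadd x (lincomb k G1 psi) \<in> dual n (dual n (rowspace r G0))"
    by metis
qed

lemma exists_maximal_self_orthogonal:
  assumes "R \<subseteq> dual n R" and "R \<subseteq> dual n W"
  shows "\<exists>D. R \<subseteq> D \<and> D \<subseteq> dual n D \<and> D \<subseteq> dual n W \<and>
      (\<forall>y \<in> dual n (D \<union> W). \<not> dotF2 n y y \<longrightarrow> y \<in> D)"
proof -
  define Fam where "Fam = {D. R \<subseteq> D \<and> D \<subseteq> dual n D \<and> D \<subseteq> dual n W}"
  have "D \<subseteq> F2vec n" if "D \<in> Fam" for D
    using that dual_F2vec[of n D] unfolding Fam_def by blast
  then have "Fam \<subseteq> Pow (F2vec n)"
    by blast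
  then have "finite Fam"
    using finite_F2vec by (simp add: finite_subset)
  moreover have "R \<in> Fam"
    using assms by (simp add: Fam_def)
  ultimately obtain D where "D \<in> Fam" and D_max: "\<forall>D'\<in>Fam. D \<subseteq> D' \<longrightarrow> D = D'"
    using finite_has_maximal2[of Fam R] by blast
  then have RD: "R \<subseteq> D" and D_self: "D \<subseteq> dual n D" and DW: "D \<subseteq> dual n W"
    by (simp_all add: Fam_def)
  have "y \<in> D" if y: "y \<in> dual n (D \<union> W)" and "\<not> dotF2 n y y" for y
  proof -
    have "y \<in> dual n D" and "y \<in> dual n W"
      using y by (simp_all add: dual_Un)
    have "D \<subseteq> F2vec n"
      using D_self dual_F2vec by blast
    then have "D \<subseteq> dual n {y}"
      by (rule subset_dual_swap) (simp add: \<open>y \<in> dual n D\<close>)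
    moreover have "y \<in> dual n {y}"
      using \<open>y \<in> dual n D\<close> \<open>\<not> dotF2 n y y\<close> by (simp add: dual_def)
    moreover have "dual n (insert y D) = dual n {y} \<inter> dual n D"
      using dual_Un[of n "{y}" D] by simp
    ultimately have "insert y D \<in> Fam"
      using RD D_self DW \<open>y \<in> dual n D\<close> \<open>y \<in> dual n W\<close> by (auto simp: Fam_def)
    then have "D = insert y D"
      using D_max subset_insertI by blast
    then show ?thesis
      by blast
  qed
  with RD D_self DW show ?thesis
    by (intro exI[of _ D]) simp
qed

lemma not_dotF2_self_if_orthogonal:
  assumes "vadd (lincomb k A (vones k)) (vones n) \<in> dual n (dual n R)"
    and y: "y \<in> dual n (R \<union> A ` {..<k})"
  shows "\<not> dotF2 n y y"
proof -
  have "\<not> dotF2 n y (A i)" if "i < k" for i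
    using y that by (auto simp: dual_def dotF2_commute[of n y])
  then have "\<not> dotF2 n y (lincomb k A (vones k))"
    by (simp add: dotF2_lincomb odd_count_False)
  moreover have "\<not> dotF2 n y (vadd (lincomb k A (vones k)) (vones n))"
    using assms by (auto simp: dual_def)
  ultimately show ?thesis
    by (simp add: dotF2_vadd dotF2_vones)
qed

lemma mapping_matrix_dual:
  assumes orth: "orthonormal_rows n k A" and A_dual: "A ` {..<k} \<subseteq> dual n D"
    and D_max: "dual n (D \<union> A ` {..<k}) \<subseteq> D" and D: "D \<subseteq> F2vec n"
  shows "mapping_matrix n k (dual n D) (dual n D) A"
  unfolding mapping_matrix_def
proof (intro conjI ballI allI impI)
  fix i assume "i < k"
  then show "A i \<in> dual n D"
    using A_dual by blast
next
  fix psi assume "psi \<in> F2vec k" "lincomb k A psi \<in> dual n (dual n D)"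
  then show "psi = vzero"
    using orthonormal_rows_lincomb_dual_imp_vzero orth A_dual by blast
next
  fix x assume x: "x \<in> dual n D"
  define psi where "psi = (\<lambda>j. j < k \<and> dotF2 n (A j) x)"
  let ?y = "vadd x (lincomb k A psi)"
  have "?y \<in> dual n D"
    using x A_dual by (simp add: vadd_dual lincomb_dual)
  moreover have "\<not> dotF2 n (A j) ?y" if "j < k" for j
    using that orthonormal_rows_dotF2_lincomb[OF orth that] by (simp add: dotF2_vadd psi_def)
  ultimately have "?y \<in> D"
    using D_max by (auto simp: dual_Un dual_def)
  then have "?y \<in> dual n (dual n D)"
    using subset_dual_dual[OF D] by blast
  moreover have "psi \<in> F2vec k"
    by (simp add: psi_def F2vec_def)
  ultimately show "\<exists>psi\<in>F2vec k. vadd x (lincomb k A psi) \<in> dual n (dual n D)"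
    by blast
qed

lemma exists_symmetric_code:
  assumes R_self: "R \<subseteq> dual n R" and orth: "orthonormal_rows n k A"
    and A_dual: "A ` {..<k} \<subseteq> dual n R"
    and ones: "vadd (lincomb k A (vones k)) (vones n) \<in> dual n (dual n R)"
  shows "\<exists>C. lincode n C \<and> dual n C \<subseteq> C \<and> C \<subseteq> dual n R \<and> mapping_matrix n k C C A"
proof -
  have "R \<subseteq> F2vec n"
    using R_self dual_F2vec by blast
  then have R_A: "R \<subseteq> dual n (A ` {..<k})"
    using A_dual by (rule subset_dual_swap)
  obtain D where RD: "R \<subseteq> D" and D_self: "D \<subseteq> dual n D"
    and DA: "D \<subseteq> dual n (A ` {..<k})"
    and D_max: "\<forall>y \<in> dual n (D \<union> A ` {..<k}). \<not> dotF2 n y y \<longrightarrow> y \<in> D"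
    using exists_maximal_self_orthogonal[OF R_self R_A] by blast
  have D: "D \<subseteq> F2vec n"
    using D_self dual_F2vec by blast
  have D_max': "dual n (D \<union> A ` {..<k}) \<subseteq> D"
  proof
    fix y assume y: "y \<in> dual n (D \<union> A ` {..<k})"
    have "dual n (D \<union> A ` {..<k}) \<subseteq> dual n (R \<union> A ` {..<k})"
      using RD by (intro dual_antimono) blast
    then have "\<not> dotF2 n y y"
      using y by (intro not_dotF2_self_if_orthogonal[OF ones]) blast
    with y D_max show "y \<in> D"
      by blast
  qed
  have "A ` {..<k} \<subseteq> F2vec n"
    using A_dual dual_F2vec by blast
  then have "A ` {..<k} \<subseteq> dual n D"
    using DA by (rule subset_dual_swap)
  then have "mapping_matrix n k (dual n D) (dual n D) A"
    using orth D_max' D by (intro mapping_matrix_dual)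
  moreover have "dual n (dual n D) \<subseteq> dual n D" and "dual n D \<subseteq> dual n R"
    using D_self RD by (simp_all add: dual_antimono)
  ultimately show ?thesis
    using lincode_dual[of n D] by (intro exI[of _ "dual n D"]) simp
qed

theorem theorem2:
  fixes n k r :: nat
    and G1 G0 :: "nat \<Rightarrow> nat \<Rightarrow> bool"
  assumes rows_in: "\<forall>i<k + r. stack k G1 G0 i \<in> F2vec n"
    and indep: "rows_independent (k + r) (stack k G1 G0)"
    and trio: "triorthogonal (k + r) n (stack k G1 G0)"
    and G1_odd: "\<forall>i<k. odd (weight n (G1 i))"
    and G0_even: "\<forall>i<r. even (weight n (G0 i))"
    and T_trio: "\<forall>psi \<in> F2vec k.
        X_all n (css_state n k (dual n (rowspace r G0)) G1 psi)
        = css_state n k (dual n (rowspace r G0)) G1 (vadd psi (vones k))"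
    and parity: "even (n - k)"
  shows "\<exists>C. lincode n C \<and> dual n C \<subseteq> C \<and>
     (\<exists>A A'. mapping_matrix n k (rowspace (k + r) (stack k G1 G0)) (dual n (rowspace r G0)) A \<and>
             mapping_matrix n k C C A' \<and>
             (\<forall>psi \<in> F2vec k. \<forall>phi \<in> F2vec k.
                cnot_transversal
                  (tensor (css_state n k (dual n (rowspace r G0)) A psi) (css_state n k C A' phi))
                = tensor (css_state n k (dual n (rowspace r G0)) A psi)
                         (css_state n k C A' (vadd psi phi))))"
proof -
  define R where "R = rowspace r G0"
  have orth: "orthonormal_rows n k G1" and G1_G0: "G1 ` {..<k} \<subseteq> dual n (G0 ` {..<r})"
    and G0_G0: "G0 ` {..<r} \<subseteq> dual n (G0 ` {..<r})"
    by (fact triorthogonal_stack_orthogonality[OF rows_in trio G1_odd G0_even])+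
  have G0_F2vec: "G0 ` {..<r} \<subseteq> F2vec n"
    using G0_G0 dual_F2vec by blast
  have G1_dual: "G1 ` {..<k} \<subseteq> dual n R" and R_self: "R \<subseteq> dual n R"
    unfolding R_def dual_rowspace[OF G0_F2vec] using G1_G0 rowspace_subset_dual[OF G0_G0] .
  have "vzero \<in> F2vec k"
    by (simp add: F2vec_def vzero_def)
  then have "X_all n (css_state n k (dual n R) G1 vzero) = css_state n k (dual n R) G1 (vones k)"
    using T_trio by (simp add: R_def)
  then have "vadd (lincomb k G1 (vones k)) (vones n) \<in> dual n (dual n R)"
    by (rule X_all_css_state_imp_vones_dual)
  then obtain C where C: "lincode n C" "dual n C \<subseteq> C" "C \<subseteq> dual n R" "mapping_matrix n k C C G1"
    using exists_symmetric_code[OF R_self orth G1_dual] by blast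
  have "dual n (dual n R) \<subseteq> dual n C"
    using C(3) by (rule dual_antimono)
  note cnot = cnot_transversal_css_state[OF this]
  have mapping_T: "mapping_matrix n k (rowspace (k + r) (stack k G1 G0)) (dual n R) G1"
    using mapping_matrix_stack[OF orth G1_dual[unfolded R_def] G0_F2vec] by (simp add: R_def)
  show ?thesis
    unfolding R_def[symmetric]
    by (intro exI[of _ C] conjI exI[of _ G1] ballI C(1,2,4) mapping_T cnot)
qed

end
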